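(* Let $L=\{\ell_1,\dots,\ell_n\}$, $R=\{r_1,\dots,r_d\}$ and let $T_1,T_2$ be two compatible spanning trees of the complete bipartite graph on $L\sqcup R$, where $T_1$ has right degree vector $v$ and $T_2$ has right degree vector $v+e_p-e_q$ for some $p,q\in[d]$. Then $T_1\cap T_2$ contains a maximal tope with right degree vector $v-\mathbf{1}_{[d]\setminus\{p\}}$. Furthermore, if $\ell_s$ has degree $1$ in both $T_1$ and $T_2$, then $T_1$ and $T_2$ contain the same edge incident with $\ell_s$.
   Context: Graphs are identified with edge sets; right degree vector $=(\deg r_1,\dots,\deg r_d)$; $e_p$ is a standard unit vector and $\mathbf{1}_A$ the 0/1 indicator vector of $A\subseteq[d]$. Two graphs are compatible if for all $J\subseteq L$, $I\subseteq R$ such that both contain a perfect matching between $J$ and $I$, these perfect matchings are equal. A maximal tope with right degree vector $w$ is a bipartite graph on $L\sqcup R$ in which every node of $L$ has degree exactly $1$ and $r_i$ has degree $w_i$. *)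

theory Defs
  imports Main
begin

text \<open>Bipartite graphs on L = {l_1..l_n} and R = {r_1..r_d} are edge sets
  G of pairs (i, j), meaning the edge l_i r_j, with i in {1..n}, j in {1..d}.
  Vertices are encoded as Inl i (for l_i) and Inr j (for r_j).\<close>

definition bip_graph :: "nat \<Rightarrow> nat \<Rightarrow> (nat \<times> nat) set \<Rightarrow> bool" where
  "bip_graph n d G \<longleftrightarrow> G \<subseteq> {1..n} \<times> {1..d}"

definition vertices :: "nat \<Rightarrow> nat \<Rightarrow> (nat + nat) set" where
  "vertices n d = Inl ` {1..n} \<union> Inr ` {1..d}"

definition adj :: "(nat \<times> nat) set \<Rightarrow> (nat + nat) \<Rightarrow> (nat + nat) \<Rightarrow> bool" where
  "adj G u v \<longleftrightarrow> (\<exists>i j. (i, j) \<in> G \<and> ((u = Inl i \<and> v = Inr j) \<or> (u = Inr j \<and> v = Inl i)))"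

definition connected_on :: "nat \<Rightarrow> nat \<Rightarrow> (nat \<times> nat) set \<Rightarrow> bool" where
  "connected_on n d G \<longleftrightarrow>
     (\<forall>u\<in>vertices n d. \<forall>v\<in>vertices n d. (u, v) \<in> {(x, y). adj G x y}\<^sup>*)"

definition is_cycle :: "(nat \<times> nat) set \<Rightarrow> (nat + nat) list \<Rightarrow> bool" where
  "is_cycle G cs \<longleftrightarrow> length cs \<ge> 3 \<and> distinct cs \<and>
     (\<forall>k < length cs - 1. adj G (cs ! k) (cs ! Suc k)) \<and> adj G (last cs) (hd cs)"

definition acyclic_graph :: "(nat \<times> nat) set \<Rightarrow> bool" where
  "acyclic_graph G \<longleftrightarrow> \<not> (\<exists>cs. is_cycle G cs)"

definition spanning_tree :: "nat \<Rightarrow> nat \<Rightarrow> (nat \<times> nat) set \<Rightarrow> bool" where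
  "spanning_tree n d T \<longleftrightarrow> bip_graph n d T \<and> connected_on n d T \<and> acyclic_graph T"

definition ldeg :: "(nat \<times> nat) set \<Rightarrow> nat \<Rightarrow> nat" where
  "ldeg G i = card {j. (i, j) \<in> G}"

definition rdeg :: "(nat \<times> nat) set \<Rightarrow> nat \<Rightarrow> nat" where
  "rdeg G j = card {i. (i, j) \<in> G}"

definition perfect_matching :: "(nat \<times> nat) set \<Rightarrow> nat set \<Rightarrow> nat set \<Rightarrow> (nat \<times> nat) set \<Rightarrow> bool" where
  "perfect_matching G J I M \<longleftrightarrow> M \<subseteq> G \<and> M \<subseteq> J \<times> I \<and>
     (\<forall>i\<in>J. \<exists>!j. (i, j) \<in> M) \<and> (\<forall>j\<in>I. \<exists>!i. (i, j) \<in> M)"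

definition compatible :: "nat \<Rightarrow> nat \<Rightarrow> (nat \<times> nat) set \<Rightarrow> (nat \<times> nat) set \<Rightarrow> bool" where
  "compatible n d G1 G2 \<longleftrightarrow>
     (\<forall>J \<subseteq> {1..n}. \<forall>I \<subseteq> {1..d}. \<forall>M1 M2.
        perfect_matching G1 J I M1 \<and> perfect_matching G2 J I M2 \<longrightarrow> M1 = M2)"

definition maximal_tope :: "nat \<Rightarrow> nat \<Rightarrow> (nat \<Rightarrow> int) \<Rightarrow> (nat \<times> nat) set \<Rightarrow> bool" where
  "maximal_tope n d w H \<longleftrightarrow> bip_graph n d H \<and>
     (\<forall>i\<in>{1..n}. ldeg H i = 1) \<and> (\<forall>j\<in>{1..d}. int (rdeg H j) = w j)"

end

(*
  Rooting a spanning tree T at a right vertex r and giving every left vertex the first edge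
  of its path to r yields a maximal tope inside T: each right vertex other than r loses
  exactly one edge, namely the one towards r. Rooting T1 at p and T2 at q gives two maximal
  topes with the same right degree vector v - 1_{[d]-{p}}. Two distinct maximal topes with
  equal right degrees, seen as maps f, g from L to R with equal fibre sizes, admit a nonempty
  set J of left vertices on which f and g are injective, differ everywhere and have the same
  image; they give two distinct perfect matchings between J and f(J), which compatibility
  forbids. So the two topes coincide, and a leaf of both trees keeps its unique edge in it.
*)
theory Submission
  imports Defs "HOL-Library.Transitive_Closure_Table"
begin

section \<open>Connectivity and bridges\<close>

abbreviation conn :: "(nat \<times> nat) set \<Rightarrow> nat + nat \<Rightarrow> nat + nat \<Rightarrow> bool" where
  "conn G \<equiv> (adj G)\<^sup>*\<^sup>*"

lemma adj_sym: "adj G u v \<longleftrightarrow> adj G v u"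
  unfolding adj_def by blast

lemma adj_mono: "adj G u v \<Longrightarrow> G \<subseteq> G' \<Longrightarrow> adj G' u v"
  unfolding adj_def by blast

lemma adj_singleton:
  "adj {e} u v \<longleftrightarrow> (u = Inl (fst e) \<and> v = Inr (snd e)) \<or> (u = Inr (snd e) \<and> v = Inl (fst e))"
  unfolding adj_def by (cases e) auto

lemma adj_Diff_singleton: "adj G u v \<longleftrightarrow> adj (G - {e}) u v \<or> (e \<in> G \<and> adj {e} u v)"
  unfolding adj_def by blast

lemma conn_sym: "conn G x y \<Longrightarrow> conn G y x"
  using symp_rtranclp[of "adj G"] adj_sym by (metis sympD sympI)

lemma conn_mono: "conn G x y \<Longrightarrow> G \<subseteq> G' \<Longrightarrow> conn G' x y"
  by (metis adj_mono mono_rtranclp)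

lemma spanning_tree_conn:
  assumes "spanning_tree n d T" "u \<in> vertices n d" "v \<in> vertices n d"
  shows "conn T u v"
  using assms unfolding spanning_tree_def connected_on_def by (simp add: rtranclp_rtrancl_eq)

lemma conn_Diff_edge:
  assumes "conn G x y" "adj {e} a b"
  shows "conn (G - {e}) x y \<or> conn (G - {e}) x a \<or> conn (G - {e}) x b"
  using assms(1)
proof (induction rule: rtranclp_induct)
  case (step y z)
  show ?case
  proof (cases "adj (G - {e}) y z")
    case True
    with step.IH show ?thesis by (meson rtranclp.rtrancl_into_rtrancl)
  next
    case False
    with step.hyps(2) have "adj {e} y z" using adj_Diff_singleton by blast
    with assms(2) have "y = a \<or> y = b" by (auto simp: adj_singleton)
    with step.IH show ?thesis by auto
  qed
qed simp

lemma connected_Diff_edge: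
  assumes "spanning_tree n d T" "adj {e} u w" "u \<in> vertices n d" "x \<in> vertices n d"
  shows "conn (T - {e}) x u \<or> conn (T - {e}) x w"
  using conn_Diff_edge[OF spanning_tree_conn[OF assms(1,4,3)] assms(2)] by blast

lemma acyclic_edge_bridge:
  assumes "acyclic_graph T" "e \<in> T" "adj {e} a b"
  shows "\<not> conn (T - {e}) a b"
proof
  assume "conn (T - {e}) a b"
  then obtain xs where path: "rtrancl_path (adj (T - {e})) a xs b" and dist: "distinct (a # xs)"
    by (metis rtranclp_eq_rtrancl_path rtrancl_path_distinct)
  have "a \<noteq> b" using assms(3) by (auto simp: adj_singleton)
  then have "xs \<noteq> []" using path by (auto elim: rtrancl_path.cases)
  then have last: "last xs = b" using rtrancl_path_last[OF path] by simp
  have "length xs \<ge> 2"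
  proof (rule ccontr)
    assume "\<not> length xs \<ge> 2"
    with \<open>xs \<noteq> []\<close> last have "xs = [b]" by (cases xs) (auto simp: not_le less_Suc_eq)
    with path have "adj (T - {e}) a b" by (auto elim: rtrancl_path.cases)
    with assms(3) show False by (auto simp: adj_def adj_singleton)
  qed
  have "is_cycle T (a # xs)"
    unfolding is_cycle_def
  proof (intro conjI allI impI)
    show "3 \<le> length (a # xs)" using \<open>length xs \<ge> 2\<close> by simp
    show "distinct (a # xs)" by fact
    fix k assume "k < length (a # xs) - 1"
    then have "adj (T - {e}) ((a # xs) ! k) (xs ! k)" using rtrancl_path_nth[OF path] by simp
    then show "adj T ((a # xs) ! k) ((a # xs) ! Suc k)" by (auto intro: adj_mono)
  next
    show "adj T (last (a # xs)) (hd (a # xs))"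
      using \<open>xs \<noteq> []\<close> last assms(2,3) adj_sym by (auto simp: adj_def adj_singleton)
  qed
  with assms(1) show False unfolding acyclic_graph_def by blast
qed

lemma adj_iff_edge: "adj G u v \<longleftrightarrow> (\<exists>e\<in>G. adj {e} u v)"
  unfolding adj_def by blast

lemma rtrancl_path_avoiding_endpoint:
  assumes "rtrancl_path (adj G) a ys b" "u \<notin> set (a # ys)" "adj {e} u w"
  shows "rtrancl_path (adj (G - {e})) a ys b"
  using assms(1,2)
proof (induction rule: rtrancl_path.induct)
  case (step x y ys z)
  have "adj (G - {e}) x y"
  proof (rule ccontr)
    assume "\<not> adj (G - {e}) x y"
    with step.hyps(1) have "adj {e} x y" using adj_Diff_singleton by blast
    with assms(3) have "u = x \<or> u = y" by (auto simp: adj_singleton)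
    with step.prems show False by simp
  qed
  with step show ?case by (auto intro: rtrancl_path.step)
qed (rule rtrancl_path.base)

section \<open>Parent edges in a rooted spanning tree\<close>

text \<open>In a tree, the parent edge of u is the first edge on the path from u to the root.\<close>
definition parent_edge :: "(nat \<times> nat) set \<Rightarrow> nat + nat \<Rightarrow> nat + nat \<Rightarrow> nat \<times> nat \<Rightarrow> bool" where
  "parent_edge T root u e \<longleftrightarrow> e \<in> T \<and> (\<exists>w. adj {e} u w) \<and> \<not> conn (T - {e}) root u"

lemma parent_edge_exists:
  assumes tree: "spanning_tree n d T"
    and "u \<in> vertices n d" "root \<in> vertices n d" "u \<noteq> root"
  shows "\<exists>e. parent_edge T root u e"
proof -
  obtain xs where path: "rtrancl_path (adj T) u xs root" and dist: "distinct (u # xs)"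
    using spanning_tree_conn[OF tree assms(2,3)]
    by (metis rtranclp_eq_rtrancl_path rtrancl_path_distinct)
  then obtain y ys where "xs = y # ys" using assms(4) by (cases xs) (auto elim: rtrancl_path.cases)
  with path have "adj T u y" and rest: "rtrancl_path (adj T) y ys root"
    by (auto elim: rtrancl_path.cases)
  then obtain e where e: "e \<in> T" "adj {e} u y" using adj_iff_edge by blast
  have "u \<notin> set (y # ys)" using dist \<open>xs = y # ys\<close> by simp
  then have "conn (T - {e}) y root"
    using rtrancl_path_avoiding_endpoint[OF rest _ e(2)] rtranclp_eq_rtrancl_path by metis
  moreover have "\<not> conn (T - {e}) u y"
    using acyclic_edge_bridge e tree unfolding spanning_tree_def by blast
  ultimately have "\<not> conn (T - {e}) root u"
    by (meson conn_sym rtranclp_trans)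
  with e show ?thesis unfolding parent_edge_def by blast
qed

lemma parent_edge_unique:
  assumes tree: "spanning_tree n d T"
    and vert: "u \<in> vertices n d" "root \<in> vertices n d"
    and "parent_edge T root u e1" "parent_edge T root u e2"
  shows "e1 = e2"
proof (rule ccontr)
  assume "e1 \<noteq> e2"
  obtain w1 where e1: "e1 \<in> T" "adj {e1} u w1" "\<not> conn (T - {e1}) root u"
    using assms(4) unfolding parent_edge_def by blast
  obtain w2 where e2: "e2 \<in> T" "adj {e2} u w2" "\<not> conn (T - {e2}) root u"
    using assms(5) unfolding parent_edge_def by blast
  have e1_in: "adj (T - {e2}) w1 u"
  proof (rule adj_mono)
    show "adj {e1} w1 u" using e1(2) by (simp add: adj_sym)
  qed (use e1(1) \<open>e1 \<noteq> e2\<close> in blast)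
  have e2_in: "adj (T - {e1}) w2 u"
  proof (rule adj_mono)
    show "adj {e2} w2 u" using e2(2) by (simp add: adj_sym)
  qed (use e2(1) \<open>e1 \<noteq> e2\<close> in blast)
  have "conn (T - {e2}) root w2"
    using connected_Diff_edge[OF tree e2(2) vert(1,2)] e2(3) by blast
  then consider "conn (T - {e2} - {e1}) root w2" | "conn (T - {e2} - {e1}) root u"
    | "conn (T - {e2} - {e1}) root w1"
    using conn_Diff_edge e1(2) by blast
  then show False
  proof cases
    case 1
    then have "conn (T - {e1}) root w2" by (rule conn_mono) blast
    with e2_in e1(3) show False by (meson rtranclp.rtrancl_into_rtrancl)
  next
    case 2
    then have "conn (T - {e2}) root u" by (rule conn_mono) blast
    with e2(3) show False ..
  next
    case 3
    then have "conn (T - {e2}) root w1" by (rule conn_mono) blast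
    with e1_in e2(3) show False by (meson rtranclp.rtrancl_into_rtrancl)
  qed
qed

lemma parent_edge_endpoints:
  assumes tree: "spanning_tree n d T" and "e \<in> T" "adj {e} u w"
    and "u \<in> vertices n d" "root \<in> vertices n d"
  shows "parent_edge T root u e \<longleftrightarrow> \<not> parent_edge T root w e"
proof -
  have "\<not> conn (T - {e}) u w"
    using acyclic_edge_bridge assms(2,3) tree unfolding spanning_tree_def by blast
  then have "\<not> (conn (T - {e}) root u \<and> conn (T - {e}) root w)"
    by (meson conn_sym rtranclp_trans)
  moreover have "conn (T - {e}) root u \<or> conn (T - {e}) root w"
    using connected_Diff_edge[OF tree assms(3,4,5)] .
  ultimately show ?thesis
    using assms(2,3) adj_sym unfolding parent_edge_def by blast
qed

definition rooted_tope :: "(nat \<times> nat) set \<Rightarrow> nat \<Rightarrow> (nat \<times> nat) set" where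
  "rooted_tope T r = {(i, j) \<in> T. parent_edge T (Inr r) (Inl i) (i, j)}"

lemma parent_edge_at_Inl: "parent_edge T root (Inl i) e \<Longrightarrow> e = (i, snd e)"
  unfolding parent_edge_def by (cases e) (auto simp: adj_singleton)

lemma parent_edge_at_Inr: "parent_edge T root (Inr j) e \<Longrightarrow> e = (fst e, j)"
  unfolding parent_edge_def by (cases e) (auto simp: adj_singleton)

lemma parent_edge_in: "parent_edge T root u e \<Longrightarrow> e \<in> T"
  unfolding parent_edge_def by blast

lemma parent_edge_root: "\<not> parent_edge T root root e"
  unfolding parent_edge_def by simp

lemma unique_parent_edge:
  assumes "spanning_tree n d T" "u \<in> vertices n d" "root \<in> vertices n d" "u \<noteq> root"
  shows "\<exists>!e. parent_edge T root u e"
  using parent_edge_exists[OF assms] parent_edge_unique[OF assms(1-3)] by blast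

lemma ldeg_rooted_tope:
  assumes tree: "spanning_tree n d T" and "r \<in> {1..d}" "i \<in> {1..n}"
  shows "ldeg (rooted_tope T r) i = 1"
proof -
  have "\<exists>!e. parent_edge T (Inr r) (Inl i) e"
    using unique_parent_edge[OF tree] assms(2,3) by (simp add: vertices_def)
  then obtain e where e: "\<And>e'. parent_edge T (Inr r) (Inl i) e' \<longleftrightarrow> e' = e" by blast
  obtain j0 where "e = (i, j0)" using parent_edge_at_Inl e by blast
  with e have "{j. (i, j) \<in> rooted_tope T r} = {j0}"
    unfolding rooted_tope_def using parent_edge_in[of T "Inr r" "Inl i" "(i, j0)"] by auto
  then show ?thesis unfolding ldeg_def by simp
qed

lemma rdeg_rooted_tope:
  assumes tree: "spanning_tree n d T" and "r \<in> {1..d}" "j \<in> {1..d}"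
  shows "rdeg T j = rdeg (rooted_tope T r) j + (if j = r then 0 else 1)"
proof -
  have bip: "T \<subseteq> {1..n} \<times> {1..d}"
    using tree unfolding spanning_tree_def bip_graph_def by blast
  let ?P = "{i. parent_edge T (Inr r) (Inr j) (i, j)}"
  have tope_iff: "(i, j) \<in> rooted_tope T r \<longleftrightarrow> (i, j) \<in> T \<and> \<not> parent_edge T (Inr r) (Inr j) (i, j)"
    for i
  proof (cases "(i, j) \<in> T")
    case True
    have "adj {(i, j)} (Inl i) (Inr j)" by (simp add: adj_singleton)
    moreover have "Inl i \<in> vertices n d" "Inr r \<in> vertices n d"
      using True bip assms(2) unfolding vertices_def by auto
    ultimately show ?thesis
      using parent_edge_endpoints[OF tree True] True by (simp add: rooted_tope_def)
  qed (simp add: rooted_tope_def)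
  have split: "{i. (i, j) \<in> T} = {i. (i, j) \<in> rooted_tope T r} \<union> ?P"
    and disjoint: "{i. (i, j) \<in> rooted_tope T r} \<inter> ?P = {}"
    using tope_iff parent_edge_in by auto
  have fin: "finite {i. (i, j) \<in> T}"
    by (rule finite_subset[of _ "{1..n}"]) (use bip in auto)
  have "card ?P = (if j = r then 0 else 1)"
  proof (cases "j = r")
    case False
    then have "\<exists>!e. parent_edge T (Inr r) (Inr j) e"
      using unique_parent_edge[OF tree] assms(2,3) by (simp add: vertices_def)
    then obtain e where e: "\<And>e'. parent_edge T (Inr r) (Inr j) e' \<longleftrightarrow> e' = e" by blast
    obtain i0 where "e = (i0, j)" using parent_edge_at_Inr e by blast
    with e have "?P = {i0}" by auto
    with False show ?thesis by simp
  qed (simp add: parent_edge_root)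
  moreover have "card {i. (i, j) \<in> T} = card {i. (i, j) \<in> rooted_tope T r} + card ?P"
    using fin unfolding split by (intro card_Un_disjoint disjoint) auto
  ultimately show ?thesis unfolding rdeg_def by simp
qed

lemma spanning_tree_maximal_tope:
  assumes tree: "spanning_tree n d T" and "r \<in> {1..d}"
    and w: "\<forall>j\<in>{1..d}. w j = int (rdeg T j) - (if j \<noteq> r then 1 else 0)"
  shows "rooted_tope T r \<subseteq> T" "maximal_tope n d w (rooted_tope T r)"
proof -
  show sub: "rooted_tope T r \<subseteq> T" unfolding rooted_tope_def by blast
  have "bip_graph n d T" using tree unfolding spanning_tree_def by blast
  with sub have "bip_graph n d (rooted_tope T r)" unfolding bip_graph_def by blast
  moreover have "int (rdeg (rooted_tope T r) j) = w j" if "j \<in> {1..d}" for j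
    using rdeg_rooted_tope[OF tree assms(2) that] w that by simp
  ultimately show "maximal_tope n d w (rooted_tope T r)"
    unfolding maximal_tope_def by (simp add: ldeg_rooted_tope[OF tree assms(2)])
qed

section \<open>Uniqueness of maximal topes in compatible graphs\<close>

lemma finite_selfmap_bij_core:
  assumes "finite V" "V \<noteq> {}" "\<rho> ` V \<subseteq> V"
  obtains I where "I \<subseteq> V" "I \<noteq> {}" "bij_betw \<rho> I I"
proof -
  let ?card = "\<lambda>k. card ((\<rho> ^^ k) ` V)"
  define k where "k = arg_min ?card (\<lambda>_. True)"
  define I where "I = (\<rho> ^^ k) ` V"
  have iterate_sub: "(\<rho> ^^ m) ` V \<subseteq> V" for m
    by (induction m) (use assms(3) in \<open>auto simp: image_comp[symmetric]\<close>)
  have "\<rho> ` I = (\<rho> ^^ k) ` (\<rho> ` V)"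
    unfolding I_def by (simp add: image_comp funpow_swap1)
  then have shrink: "\<rho> ` I \<subseteq> I"
    unfolding I_def using assms(3) by blast
  have "card I \<le> card (\<rho> ` I)"
    using arg_min_nat_le[where P = "\<lambda>_. True" and m = ?card and x = "Suc k"]
    unfolding I_def k_def by (simp add: image_comp)
  moreover have fin: "finite I" unfolding I_def using assms(1) by simp
  ultimately have "\<rho> ` I = I" using shrink by (simp add: card_seteq)
  moreover have "inj_on \<rho> I" using fin \<open>\<rho> ` I = I\<close> by (simp add: eq_card_imp_inj_on)
  ultimately have "bij_betw \<rho> I I" by (simp add: bij_betw_def)
  moreover have "I \<subseteq> V" "I \<noteq> {}" unfolding I_def using iterate_sub assms(2) by auto
  ultimately show ?thesis using that by blast
qed

lemma equal_fibres_cycle: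
  fixes f g :: "'a \<Rightarrow> 'b"
  assumes fin: "finite A" and fibres: "\<And>y. card {x \<in> A. f x = y} = card {x \<in> A. g x = y}"
    and "x0 \<in> A" "f x0 \<noteq> g x0"
  obtains J where "J \<subseteq> A" "J \<noteq> {}" "inj_on f J" "inj_on g J" "f ` J = g ` J"
    "\<forall>x\<in>J. f x \<noteq> g x"
proof -
  define X where "X = {x \<in> A. f x \<noteq> g x}"
  have finX: "finite X" using fin unfolding X_def by simp
  have fibresX: "card {x \<in> X. f x = y} = card {x \<in> X. g x = y}" for y
  proof -
    let ?C = "{x \<in> A. f x = y \<and> g x = y}"
    have "{x \<in> A. f x = y} = {x \<in> X. f x = y} \<union> ?C" "{x \<in> A. g x = y} = {x \<in> X. g x = y} \<union> ?C"
      unfolding X_def by auto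
    moreover have "card ({x \<in> X. h x = y} \<union> ?C) = card {x \<in> X. h x = y} + card ?C" for h
      using fin by (intro card_Un_disjoint) (auto simp: X_def)
    ultimately show ?thesis using fibres[of y] by simp
  qed
  have "\<exists>x'\<in>X. f x' = y" if "y \<in> g ` X" for y
  proof -
    have "{x \<in> X. g x = y} \<noteq> {}" using that by blast
    then have "card {x \<in> X. f x = y} \<noteq> 0" using finX fibresX[of y] by simp
    then show ?thesis by (metis (mono_tags, lifting) card.empty empty_Collect_eq)
  qed
  then obtain \<tau> where \<tau>: "\<And>y. y \<in> g ` X \<Longrightarrow> \<tau> y \<in> X \<and> f (\<tau> y) = y" by metis
  \<comment> \<open>J is a periodic part of x \<mapsto> (an f-preimage of g x) inside the set X where f and g differ.\<close>
  define \<sigma> where "\<sigma> = \<tau> \<circ> g"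
  have "\<sigma> ` X \<subseteq> X" unfolding \<sigma>_def using \<tau> by auto
  moreover have "X \<noteq> {}" using assms(3,4) unfolding X_def by blast
  ultimately obtain J where J: "J \<subseteq> X" "J \<noteq> {}" "bij_betw \<sigma> J J"
    using finite_selfmap_bij_core finX by blast
  have f\<sigma>: "f (\<sigma> x) = g x" if "x \<in> J" for x using \<tau> J(1) that unfolding \<sigma>_def by auto
  have "g ` J = f ` \<sigma> ` J" using f\<sigma> by (simp add: image_comp)
  then have images: "f ` J = g ` J" using J(3) by (simp add: bij_betw_def)
  have inj_g: "inj_on g J" using J(3) unfolding bij_betw_def \<sigma>_def by (rule inj_on_imageI2[OF conjunct1])
  have "card (f ` J) = card J" using images inj_g by (simp add: card_image)
  then have "inj_on f J" using finite_subset[OF J(1) finX] by (intro eq_card_imp_inj_on) auto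
  with J images inj_g show ?thesis using that unfolding X_def by blast
qed

lemma maximal_tope_graph:
  assumes "maximal_tope n d w H"
  obtains f where "H = (\<lambda>i. (i, f i)) ` {1..n}"
proof -
  have "\<exists>j. {j'. (i, j') \<in> H} = {j}" if "i \<in> {1..n}" for i
  proof -
    have "card {j'. (i, j') \<in> H} = 1"
      using assms that unfolding maximal_tope_def ldeg_def by blast
    then show ?thesis by (simp add: card_1_singleton_iff)
  qed
  then obtain f where f: "\<And>i. i \<in> {1..n} \<Longrightarrow> {j. (i, j) \<in> H} = {f i}" by metis
  have bip: "H \<subseteq> {1..n} \<times> {1..d}" using assms unfolding maximal_tope_def bip_graph_def by blast
  have "H = (\<lambda>i. (i, f i)) ` {1..n}"
  proof (intro set_eqI iffI)
    fix e assume "e \<in> H"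
    moreover obtain i j where "e = (i, j)" by fastforce
    ultimately have "i \<in> {1..n}" "j \<in> {j. (i, j) \<in> H}" using bip by auto
    with \<open>e = (i, j)\<close> f show "e \<in> (\<lambda>i. (i, f i)) ` {1..n}" by auto
  next
    fix e assume "e \<in> (\<lambda>i. (i, f i)) ` {1..n}"
    with f show "e \<in> H" by blast
  qed
  with that show ?thesis .
qed

lemma rdeg_graph: "rdeg ((\<lambda>i. (i, f i)) ` A) y = card {i \<in> A. f i = y}"
  unfolding rdeg_def by (rule arg_cong[where f = card]) auto

lemma graph_perfect_matching:
  assumes "inj_on f J" "(\<lambda>i. (i, f i)) ` J \<subseteq> G"
  shows "perfect_matching G J (f ` J) ((\<lambda>i. (i, f i)) ` J)"
  using assms unfolding perfect_matching_def inj_on_def by auto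

lemma compatible_maximal_tope_unique:
  assumes compat: "compatible n d G1 G2"
    and tope1: "maximal_tope n d w H1" and tope2: "maximal_tope n d w H2"
    and "H1 \<subseteq> G1" "H2 \<subseteq> G2"
  shows "H1 = H2"
proof (rule ccontr)
  assume "H1 \<noteq> H2"
  obtain f where f: "H1 = (\<lambda>i. (i, f i)) ` {1..n}" using tope1 by (rule maximal_tope_graph)
  obtain g where g: "H2 = (\<lambda>i. (i, g i)) ` {1..n}" using tope2 by (rule maximal_tope_graph)
  have "rdeg H1 y = rdeg H2 y" for y
  proof (cases "y \<in> {1..d}")
    case True
    then have "int (rdeg H1 y) = int (rdeg H2 y)"
      using tope1 tope2 unfolding maximal_tope_def by simp
    then show ?thesis by simp
  next
    case False
    then have "{i. (i, y) \<in> H1} = {}" "{i. (i, y) \<in> H2} = {}"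
      using tope1 tope2 unfolding maximal_tope_def bip_graph_def by auto
    then show ?thesis unfolding rdeg_def by simp
  qed
  then have fibres: "card {i \<in> {1..n}. f i = y} = card {i \<in> {1..n}. g i = y}" for y
    unfolding f g rdeg_graph .
  have "\<exists>i0\<in>{1..n}. f i0 \<noteq> g i0"
  proof (rule ccontr)
    assume "\<not> (\<exists>i0\<in>{1..n}. f i0 \<noteq> g i0)"
    then have "H1 = H2" unfolding f g by (intro image_cong) auto
    with \<open>H1 \<noteq> H2\<close> show False ..
  qed
  then obtain i0 where "i0 \<in> {1..n}" "f i0 \<noteq> g i0" by blast
  then obtain J where J: "J \<subseteq> {1..n}" "J \<noteq> {}" "inj_on f J" "inj_on g J" "f ` J = g ` J"
    "\<forall>i\<in>J. f i \<noteq> g i"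
    using equal_fibres_cycle[of "{1..n}" f g] fibres by blast
  have "H1 \<subseteq> {1..n} \<times> {1..d}" using tope1 unfolding maximal_tope_def bip_graph_def by blast
  then have range: "f ` J \<subseteq> {1..d}" using J(1) unfolding f by auto
  have "perfect_matching G1 J (f ` J) ((\<lambda>i. (i, f i)) ` J)"
    using order_trans[OF image_mono[OF J(1)] assms(4)[unfolded f]]
    by (rule graph_perfect_matching[OF J(3)])
  moreover have "perfect_matching G2 J (f ` J) ((\<lambda>i. (i, g i)) ` J)"
    using order_trans[OF image_mono[OF J(1)] assms(5)[unfolded g]] unfolding J(5)
    by (rule graph_perfect_matching[OF J(4)])
  ultimately have "(\<lambda>i. (i, f i)) ` J = (\<lambda>i. (i, g i)) ` J"
    by (rule compat[unfolded compatible_def, rule_format, OF J(1) range conjI])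
  moreover obtain x where "x \<in> J" using J(2) by blast
  ultimately have "(x, f x) \<in> (\<lambda>i. (i, g i)) ` J" by (metis imageI)
  with J(6) show False by auto
qed

lemma maximal_tope_leaf_edge:
  assumes "maximal_tope n d w H" "H \<subseteq> T" "s \<in> {1..n}" "ldeg T s = 1"
  shows "{j. (s, j) \<in> H} = {j. (s, j) \<in> T}"
proof (rule card_seteq)
  show "finite {j. (s, j) \<in> T}" using assms(4) unfolding ldeg_def by (simp add: card_ge_0_finite)
  show "{j. (s, j) \<in> H} \<subseteq> {j. (s, j) \<in> T}" using assms(2) by blast
  show "card {j. (s, j) \<in> T} \<le> card {j. (s, j) \<in> H}"
    using assms unfolding maximal_tope_def ldeg_def by simp
qed

theorem corollary2p10:
  fixes n d p q :: nat and T1 T2 :: "(nat \<times> nat) set" and v :: "nat \<Rightarrow> int"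
  assumes "spanning_tree n d T1" and "spanning_tree n d T2"
    and "compatible n d T1 T2"
    and "p \<in> {1..d}" and "q \<in> {1..d}"
    and "\<forall>j\<in>{1..d}. int (rdeg T1 j) = v j"
    and "\<forall>j\<in>{1..d}. int (rdeg T2 j) = v j + (if j = p then 1 else 0) - (if j = q then 1 else 0)"
  shows "(\<exists>H. H \<subseteq> T1 \<inter> T2 \<and> maximal_tope n d (\<lambda>j. v j - (if j \<noteq> p then 1 else 0)) H)
    \<and> (\<forall>s\<in>{1..n}. ldeg T1 s = 1 \<and> ldeg T2 s = 1 \<longrightarrow>
          {e \<in> T1. fst e = s} = {e \<in> T2. fst e = s})"
proof -
  let ?w = "\<lambda>j. v j - (if j \<noteq> p then 1 else 0)"
  have "\<forall>j\<in>{1..d}. ?w j = int (rdeg T1 j) - (if j \<noteq> p then 1 else 0)"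
    using assms(6) by simp
  note tope1 = spanning_tree_maximal_tope[OF assms(1,4) this]
  have "\<forall>j\<in>{1..d}. ?w j = int (rdeg T2 j) - (if j \<noteq> q then 1 else 0)"
    using assms(7) by simp
  note tope2 = spanning_tree_maximal_tope[OF assms(2,5) this]
  have same: "rooted_tope T1 p = rooted_tope T2 q"
    using compatible_maximal_tope_unique[OF assms(3) tope1(2) tope2(2) tope1(1) tope2(1)] .
  show ?thesis
  proof (intro conjI ballI impI)
    show "\<exists>H. H \<subseteq> T1 \<inter> T2 \<and> maximal_tope n d ?w H"
      using tope1 tope2(1) same by (intro exI[of _ "rooted_tope T1 p"]) simp
  next
    fix s assume s: "s \<in> {1..n}" and leaf: "ldeg T1 s = 1 \<and> ldeg T2 s = 1"
    have "{j. (s, j) \<in> T1} = {j. (s, j) \<in> T2}"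
      using maximal_tope_leaf_edge[OF tope1(2,1) s conjunct1[OF leaf]]
        maximal_tope_leaf_edge[OF tope2(2,1) s conjunct2[OF leaf]] same by simp
    then show "{e \<in> T1. fst e = s} = {e \<in> T2. fst e = s}" by force
  qed
qed

end
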